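(* Let $I$ be a non-degenerate interval and $f:I\to\mathbb{R}$ continuous with a monotone graph $G_f=\{(x,f(x)):x\in I\}\subseteq\mathbb{R}^2$. Then $G_f$ has $\sigma$-finite one-dimensional Hausdorff measure; in particular the Hausdorff dimension of $G_f$ equals $1$.
   Context: A metric space $(X,d)$ is monotone if there are a linear order $<$ on $X$ and a constant $c>0$ such that $d(x,y)\le c\,d(x,z)$ whenever $x<y<z$ in $X$. The graph carries the Euclidean metric. *)

theory Defs
  imports "HOL-Analysis.Analysis"
begin

definition monotone_metric :: "'a::metric_space set \<Rightarrow> bool" where
  "monotone_metric X \<longleftrightarrow>
     (\<exists>r c. linear_order_on X r \<and> c > 0 \<and>
        (\<forall>x\<in>X. \<forall>y\<in>X. \<forall>z\<in>X.
           (x, y) \<in> r \<and> x \<noteq> y \<and> (y, z) \<in> r \<and> y \<noteq> z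
             \<longrightarrow> dist x y \<le> c * dist x z))"

definition hweight :: "real \<Rightarrow> 'a::metric_space set \<Rightarrow> ennreal" where
  "hweight s C = (if C = {} then 0 else if s = 0 then 1 else ennreal (diameter C powr s))"

definition hausdorff_pre :: "real \<Rightarrow> real \<Rightarrow> 'a::metric_space set \<Rightarrow> ennreal" where
  "hausdorff_pre s \<delta> A =
     (INF C \<in> {C :: nat \<Rightarrow> 'a set. A \<subseteq> (\<Union>i. C i) \<and>
                 (\<forall>i. bounded (C i) \<and> diameter (C i) \<le> \<delta>)}.
        (\<Sum>i. hweight s (C i)))"

definition hausdorff_measure :: "real \<Rightarrow> 'a::metric_space set \<Rightarrow> ennreal" where
  "hausdorff_measure s A = (SUP \<delta> \<in> {0<..}. hausdorff_pre s \<delta> A)"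

definition hausdorff_dim :: "'a::metric_space set \<Rightarrow> real" where
  "hausdorff_dim A = Inf {s. s \<ge> 0 \<and> hausdorff_measure s A = 0}"

definition sigma_finite_hausdorff :: "real \<Rightarrow> 'a::metric_space set \<Rightarrow> bool" where
  "sigma_finite_hausdorff s A \<longleftrightarrow>
     (\<exists>B :: nat \<Rightarrow> 'a set. A = (\<Union>n. B n) \<and> (\<forall>n. hausdorff_measure s (B n) < \<infinity>))"

end

theory Submission
  imports Defs
begin

text \<open>
  Write \<open>g x = (x, f x)\<close> and fix a monotone order on the graph. In such an order the points
  of a connected set not containing \<open>p\<close> all lie on the same side of \<open>p\<close>, because the points
  on either side form relatively open sets. Since \<open>g\<close> is continuous and injective, the graph
  over \<open>I \<inter> {..<x}\<close> is connected and misses \<open>g x\<close>, so every \<open>x\<close> lies either above or below its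
  whole left part. On the points of the first kind the order of the graph follows the order
  of the reals, on the others it reverses it; either way \<open>g\<close> is monotone along the reals:
  \<open>dist (g s) (g t) \<le> C * dist (g s) (g u)\<close> for \<open>s < t < u\<close>.

  For such a graph every point either lies on arbitrarily short chords \<open>[s, u]\<close> with
  \<open>\<bar>f u - f s\<bar> < u - s\<close>, or all chords around it of length at most \<open>1 / (n + 1)\<close> are steep,
  for some \<open>n\<close>. Over a flat chord monotonicity keeps the graph within distance
  \<open>2 C (u - s)\<close> of \<open>g s\<close>, so the Vitali covering lemma bounds the \<open>H\<^sup>1\<close> measure of the
  first kind of points over bounded intervals. Over short intervals of steep points
  \<open>\<bar>x - y\<bar> \<le> \<bar>f x - f y\<bar>\<close>, and covering by horizontal strips shows that \<open>H\<^sup>1\<close> is finite there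
  as well. So \<open>H\<^sup>1\<close> is \<open>\<sigma>\<close>-finite on the graph and \<open>H\<^sup>s\<close> vanishes for \<open>s > 1\<close>, whereas for
  \<open>s \<le> 1\<close> it is at least half the length of the projection of the graph to the first axis.
\<close>

section \<open>Hausdorff measure\<close>

lemma hausdorff_pre_le_cover:
  assumes "A \<subseteq> (\<Union>i. C i)" "\<And>i. bounded (C i) \<and> diameter (C i) \<le> \<delta>"
  shows "hausdorff_pre s \<delta> A \<le> (\<Sum>i. hweight s (C i))"
  unfolding hausdorff_pre_def by (rule INF_lower) (use assms in auto)

lemma hausdorff_pre_le_finite_cover:
  fixes Q :: "nat \<Rightarrow> 'a::metric_space set"
  assumes "A \<subseteq> (\<Union>j<N. Q j)" "\<And>j. j < N \<Longrightarrow> bounded (Q j) \<and> diameter (Q j) \<le> \<delta>" "0 \<le> \<delta>"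
  shows "hausdorff_pre s \<delta> A \<le> (\<Sum>j<N. hweight s (Q j))"
proof -
  have "hausdorff_pre s \<delta> A \<le> (\<Sum>j. hweight s (if j < N then Q j else {}))"
    using assms by (intro hausdorff_pre_le_cover) auto
  also have "\<dots> = (\<Sum>j<N. hweight s (Q j))"
    by (subst suminf_finite[of "{..<N}"]) (auto simp: hweight_def)
  finally show ?thesis .
qed

lemma hausdorff_pre_le_countable_cover:
  fixes W :: "'i \<Rightarrow> 'a::metric_space set"
  assumes "countable J" "A \<subseteq> (\<Union>j\<in>J. W j)"
    and small: "\<And>j. j \<in> J \<Longrightarrow> bounded (W j) \<and> diameter (W j) \<le> \<delta>" and "0 \<le> \<delta>"
  shows "hausdorff_pre s \<delta> A \<le> (\<integral>\<^sup>+j. hweight s (W j) \<partial>count_space J)"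
proof -
  define D where "D m = (if m \<in> to_nat_on J ` J then W (from_nat_into J m) else {})" for m
  have D_enum: "D (to_nat_on J j) = W j" if "j \<in> J" for j
    using that assms(1) by (simp add: D_def from_nat_into_to_nat_on)
  have "A \<subseteq> (\<Union>m. D m)"
    using assms(2) D_enum by force
  moreover have "bounded (D m) \<and> diameter (D m) \<le> \<delta>" for m
    using small assms(1,4) by (auto simp: D_def from_nat_into_to_nat_on)
  ultimately have "hausdorff_pre s \<delta> A \<le> (\<Sum>m. hweight s (D m))"
    by (rule hausdorff_pre_le_cover)
  also have "\<dots> = (\<integral>\<^sup>+m. hweight s (D m) \<partial>count_space UNIV)"
    by (rule nn_integral_count_space_nat[symmetric])
  also have "\<dots> = (\<integral>\<^sup>+m. hweight s (D m) \<partial>count_space (to_nat_on J ` J))"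
    by (rule nn_integral_count_space_eq) (auto simp: D_def hweight_def)
  also have "\<dots> = (\<integral>\<^sup>+j. hweight s (D (to_nat_on J j)) \<partial>count_space J)"
    using inj_on_to_nat_on[OF assms(1)]
    by (intro nn_integral_bij_count_space[symmetric] inj_on_imp_bij_betw)
  also have "\<dots> = (\<integral>\<^sup>+j. hweight s (W j) \<partial>count_space J)"
    by (rule nn_integral_cong) (simp add: D_enum)
  finally show ?thesis .
qed

lemma hausdorff_pre_le_measure: "\<delta> > 0 \<Longrightarrow> hausdorff_pre s \<delta> A \<le> hausdorff_measure s A"
  unfolding hausdorff_measure_def by (rule SUP_upper) auto

lemma hausdorff_measure_le:
  "(\<And>\<delta>. \<delta> > 0 \<Longrightarrow> hausdorff_pre s \<delta> A \<le> M) \<Longrightarrow> hausdorff_measure s A \<le> M"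
  unfolding hausdorff_measure_def by (rule SUP_least) auto

lemma hausdorff_pre_antimono: "\<delta> \<le> \<delta>' \<Longrightarrow> hausdorff_pre s \<delta>' A \<le> hausdorff_pre s \<delta> A"
  unfolding hausdorff_pre_def by (rule INF_superset_mono) (auto intro: order.trans)

lemma hausdorff_measure_empty: "hausdorff_measure s ({} :: 'a::metric_space set) = 0"
proof -
  have "hausdorff_pre s \<delta> ({} :: 'a set) \<le> (\<Sum>i. hweight s ({} :: 'a set))" if "\<delta> > 0" for \<delta>
    using hausdorff_pre_le_cover[of "{}" "\<lambda>_. {}" \<delta> s] that by simp
  then show ?thesis
    by (intro antisym hausdorff_measure_le) (simp_all add: hweight_def)
qed

lemma hweight_one: "bounded C \<Longrightarrow> hweight 1 C = ennreal (diameter C)"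
  unfolding hweight_def using diameter_ge_0[of C] by auto

lemma bounded_diameter_le:
  fixes S :: "'a::metric_space set"
  assumes "\<And>x y. x \<in> S \<Longrightarrow> y \<in> S \<Longrightarrow> dist x y \<le> d" "0 \<le> d"
  shows "bounded S \<and> diameter S \<le> d"
proof
  show "bounded S"
    unfolding bounded_def using assms(1) by (cases "S = {}") blast+
  show "diameter S \<le> d"
    using assms by (auto simp: diameter_def intro: cSUP_least)
qed

lemma UN_prod_decode: "(\<Union>n. \<Union>k. A n k) = (\<Union>m. case_prod A (prod_decode m))"
  by (auto simp: UN_iff) (metis case_prod_conv prod_encode_inverse)

lemma hausdorff_pre_UN_le:
  fixes A :: "nat \<Rightarrow> 'a::metric_space set"
  shows "hausdorff_pre s \<delta> (\<Union>n. A n) \<le> (\<Sum>n. hausdorff_pre s \<delta> (A n))"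
proof (rule ennreal_le_epsilon)
  fix e :: real
  assume finite: "(\<Sum>n. hausdorff_pre s \<delta> (A n)) < top" and "0 < e"
  define e' where "e' n = ennreal (e * (1/2) ^ Suc n)" for n
  have e'_sum: "(\<Sum>n. e' n) = ennreal e"
  proof -
    have "(\<lambda>n. e * (1/2) ^ Suc n) sums e"
      using sums_mult[OF power_half_series, of e] by simp
    then show ?thesis
      unfolding e'_def using \<open>0 < e\<close> by (simp add: suminf_ennreal2 sums_iff)
  qed
  have "\<exists>C. A n \<subseteq> (\<Union>i. C i) \<and> (\<forall>i. bounded (C i) \<and> diameter (C i) \<le> \<delta>) \<and>
            (\<Sum>i. hweight s (C i)) < hausdorff_pre s \<delta> (A n) + e' n" for n
  proof -
    have "hausdorff_pre s \<delta> (A n) < top"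
      using finite by (rule ennreal_suminf_lessD)
    then have "hausdorff_pre s \<delta> (A n) < hausdorff_pre s \<delta> (A n) + e' n"
      using \<open>0 < e\<close> by (simp add: e'_def)
    then show ?thesis
      unfolding hausdorff_pre_def INF_less_iff by blast
  qed
  then obtain C where cover: "\<And>n. A n \<subseteq> (\<Union>i. C n i)"
    and small: "\<And>n i. bounded (C n i) \<and> diameter (C n i) \<le> \<delta>"
    and sum: "\<And>n. (\<Sum>i. hweight s (C n i)) < hausdorff_pre s \<delta> (A n) + e' n"
    by metis
  have "(\<Union>n. A n) \<subseteq> (\<Union>m. case_prod C (prod_decode m))"
    using cover by (fastforce simp flip: UN_prod_decode)
  then have "hausdorff_pre s \<delta> (\<Union>n. A n) \<le> (\<Sum>m. hweight s (case_prod C (prod_decode m)))"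
    by (rule hausdorff_pre_le_cover) (simp add: small split: prod.split)
  also have "\<dots> = (\<Sum>n. \<Sum>i. hweight s (C n i))"
    using suminf_ennreal_2dimen[where f = "\<lambda>(n, i). hweight s (C n i)"]
    by (simp add: case_prod_beta')
  also have "\<dots> \<le> (\<Sum>n. hausdorff_pre s \<delta> (A n) + e' n)"
    using sum by (intro suminf_le less_imp_le) auto
  also have "\<dots> = (\<Sum>n. hausdorff_pre s \<delta> (A n)) + ennreal e"
    by (simp add: suminf_add[symmetric] e'_sum)
  finally show "hausdorff_pre s \<delta> (\<Union>n. A n) \<le> (\<Sum>n. hausdorff_pre s \<delta> (A n)) + ennreal e" .
qed

lemma hausdorff_measure_UN_null:
  fixes A :: "nat \<Rightarrow> 'a::metric_space set"
  assumes "\<And>n. hausdorff_measure s (A n) = 0"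
  shows "hausdorff_measure s (\<Union>n. A n) = 0"
proof -
  have "hausdorff_pre s \<delta> (\<Union>n. A n) = 0" if "\<delta> > 0" for \<delta>
  proof -
    have "hausdorff_pre s \<delta> (A n) = 0" for n
      using hausdorff_pre_le_measure[OF \<open>\<delta> > 0\<close>, of s "A n"] assms by simp
    then show ?thesis
      using hausdorff_pre_UN_le[of s \<delta> A] by simp
  qed
  then show ?thesis
    unfolding hausdorff_measure_def by simp
qed

lemma sigma_finite_hausdorff_if_finite:
  "hausdorff_measure s A < \<infinity> \<Longrightarrow> sigma_finite_hausdorff s A"
  unfolding sigma_finite_hausdorff_def by (rule exI[of _ "\<lambda>_. A"]) auto

lemma sigma_finite_hausdorff_UN:
  fixes A :: "nat \<Rightarrow> 'a::metric_space set"
  assumes "\<And>n. sigma_finite_hausdorff s (A n)"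
  shows "sigma_finite_hausdorff s (\<Union>n. A n)"
proof -
  have "\<forall>n. \<exists>B :: nat \<Rightarrow> 'a set. A n = (\<Union>k. B k) \<and> (\<forall>k. hausdorff_measure s (B k) < \<infinity>)"
    using assms unfolding sigma_finite_hausdorff_def by blast
  then obtain B :: "nat \<Rightarrow> nat \<Rightarrow> 'a set" where A_eq: "\<And>n. A n = (\<Union>k. B n k)"
    and finite: "\<And>n k. hausdorff_measure s (B n k) < \<infinity>"
    by metis
  have "(\<Union>n. A n) = (\<Union>m. case_prod B (prod_decode m))"
    unfolding A_eq by (rule UN_prod_decode)
  moreover have "hausdorff_measure s (case_prod B (prod_decode m)) < \<infinity>" for m
    using finite by (simp split: prod.split)
  ultimately show ?thesis
    unfolding sigma_finite_hausdorff_def by blast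
qed

lemma sigma_finite_hausdorff_UN_countable:
  fixes A :: "'i \<Rightarrow> 'a::metric_space set"
  assumes "countable I" "\<And>i. i \<in> I \<Longrightarrow> sigma_finite_hausdorff s (A i)"
  shows "sigma_finite_hausdorff s (\<Union>i\<in>I. A i)"
proof (cases "I = {}")
  case True
  then show ?thesis
    by (simp add: sigma_finite_hausdorff_if_finite hausdorff_measure_empty)
next
  case False
  then have "(\<Union>i\<in>I. A i) = (\<Union>n. A (from_nat_into I n))"
    using range_from_nat_into[OF False assms(1)] by (metis image_image)
  then show ?thesis
    using assms False by (simp add: sigma_finite_hausdorff_UN from_nat_into)
qed

lemma sigma_finite_hausdorff_Un:
  assumes "sigma_finite_hausdorff s A" "sigma_finite_hausdorff s B"
  shows "sigma_finite_hausdorff s (A \<union> B)"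
  unfolding Un_range_binary using assms by (intro sigma_finite_hausdorff_UN) (simp add: binary_def)

lemma hweight_le_powr_mult:
  assumes "bounded C" "diameter C \<le> \<eta>" "0 \<le> t" "t < s"
  shows "hweight s C \<le> ennreal (\<eta> powr (s - t)) * hweight t C"
proof (cases "C = {}")
  case False
  define d where "d = diameter C"
  define w where "w = (if t = 0 then 1 else d powr t)"
  have "0 \<le> d"
    unfolding d_def using assms(1) by (rule diameter_ge_0)
  have "d powr s \<le> \<eta> powr (s - t) * w"
  proof (cases "t = 0 \<or> d = 0")
    case True
    then show ?thesis
      using assms \<open>0 \<le> d\<close> by (auto intro: powr_mono2 simp: d_def w_def)
  next
    case False
    have "d powr s = d powr (s - t) * d powr t"
      by (simp flip: powr_add)
    also have "\<dots> \<le> \<eta> powr (s - t) * d powr t"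
      using assms \<open>0 \<le> d\<close> by (intro mult_right_mono powr_mono2) (auto simp: d_def)
    finally show ?thesis
      using False by (simp add: w_def)
  qed
  then have "ennreal (d powr s) \<le> ennreal (\<eta> powr (s - t)) * ennreal w"
    by (simp add: w_def flip: ennreal_mult)
  moreover have "hweight s C = ennreal (d powr s)" "hweight t C = ennreal w"
    using False assms(3,4) by (simp_all add: hweight_def d_def w_def)
  ultimately show ?thesis
    by simp
qed (simp add: hweight_def)

lemma hausdorff_pre_le_powr_mult:
  assumes "0 < \<eta>" "\<eta> \<le> \<delta>" "0 \<le> t" "t < s" "hausdorff_pre t \<eta> B < M"
  shows "hausdorff_pre s \<delta> B \<le> ennreal (\<eta> powr (s - t)) * M"
proof -
  obtain C where cover: "B \<subseteq> (\<Union>i. C i)" and small: "\<forall>i. bounded (C i) \<and> diameter (C i) \<le> \<eta>"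
    and sum: "(\<Sum>i. hweight t (C i)) < M"
    using assms(5) unfolding hausdorff_pre_def INF_less_iff by blast
  have "hausdorff_pre s \<delta> B \<le> (\<Sum>i. hweight s (C i))"
    using cover small \<open>\<eta> \<le> \<delta>\<close> by (intro hausdorff_pre_le_cover) (auto intro: order_trans)
  also have "\<dots> \<le> (\<Sum>i. ennreal (\<eta> powr (s - t)) * hweight t (C i))"
    using small assms by (intro suminf_le hweight_le_powr_mult) auto
  also have "\<dots> = ennreal (\<eta> powr (s - t)) * (\<Sum>i. hweight t (C i))"
    by (rule ennreal_suminf_cmult)
  also have "\<dots> \<le> ennreal (\<eta> powr (s - t)) * M"
    using sum by (intro mult_left_mono) auto
  finally show ?thesis .
qed

lemma hausdorff_measure_null_if_finite_lower:
  assumes finite: "hausdorff_measure t B < \<infinity>" and "0 \<le> t" "t < s"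
  shows "hausdorff_measure s B = 0"
proof -
  obtain m where m: "hausdorff_measure t B = ennreal m" "0 \<le> m"
    using finite by (cases "hausdorff_measure t B" rule: ennreal_cases) auto
  have small: "hausdorff_pre s \<delta> B \<le> ennreal e" if "\<delta> > 0" "e > 0" for \<delta> e
  proof -
    define \<eta> where "\<eta> = min \<delta> ((e / (m + 1)) powr (1 / (s - t)))"
    have "\<eta> > 0"
      unfolding \<eta>_def using that m \<open>t < s\<close> by auto
    have "\<eta> powr (s - t) \<le> ((e / (m + 1)) powr (1 / (s - t))) powr (s - t)"
      using \<open>\<eta> > 0\<close> \<open>t < s\<close> by (intro powr_mono2) (auto simp: \<eta>_def)
    also have "\<dots> = e / (m + 1)"
      using that m \<open>t < s\<close> by (simp add: powr_powr)
    finally have \<eta>_pow: "\<eta> powr (s - t) * (m + 1) \<le> e"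
      using m by (simp add: field_simps)
    have "hausdorff_pre t \<eta> B < ennreal (m + 1)"
      using hausdorff_pre_le_measure[OF \<open>\<eta> > 0\<close>, of t B] m
      by (simp add: order_le_less_trans ennreal_lessI)
    then have "hausdorff_pre s \<delta> B \<le> ennreal (\<eta> powr (s - t)) * ennreal (m + 1)"
      using \<open>\<eta> > 0\<close> assms(2,3) by (intro hausdorff_pre_le_powr_mult) (auto simp: \<eta>_def)
    also have "\<dots> = ennreal (\<eta> powr (s - t) * (m + 1))"
      by (rule ennreal_mult[symmetric]) (use m in auto)
    also have "\<dots> \<le> ennreal e"
      using \<eta>_pow by (rule ennreal_leI)
    finally show ?thesis .
  qed
  have "hausdorff_pre s \<delta> B \<le> 0" if "\<delta> > 0" for \<delta>
    by (rule ennreal_le_epsilon) (simp add: small[OF that])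
  then show ?thesis
    unfolding hausdorff_measure_def by simp
qed

lemma hausdorff_measure_null_if_sigma_finite_lower:
  fixes A :: "'a::metric_space set"
  assumes "sigma_finite_hausdorff t A" "0 \<le> t" "t < s"
  shows "hausdorff_measure s A = 0"
proof -
  obtain B :: "nat \<Rightarrow> 'a set" where A_eq: "A = (\<Union>n. B n)"
    and finite: "\<And>n. hausdorff_measure t (B n) < \<infinity>"
    using assms(1) unfolding sigma_finite_hausdorff_def by blast
  show ?thesis
    unfolding A_eq using finite assms(2,3)
    by (intro hausdorff_measure_UN_null hausdorff_measure_null_if_finite_lower)
qed

lemma hausdorff_dim_eqI:
  assumes "0 \<le> d"
    and null: "\<And>s. d < s \<Longrightarrow> hausdorff_measure s A = 0"
    and pos: "\<And>s. 0 \<le> s \<Longrightarrow> s < d \<Longrightarrow> hausdorff_measure s A \<noteq> 0"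
  shows "hausdorff_dim A = d"
proof -
  define T where "T = {s. s \<ge> 0 \<and> hausdorff_measure s A = 0}"
  have "d + 1 \<in> T" and "bdd_below T"
    using assms(1) null by (auto simp: T_def bdd_below_def)
  have "Inf T \<le> d"
  proof (rule ccontr)
    assume "\<not> Inf T \<le> d"
    then have "(d + Inf T) / 2 \<in> T"
      using assms(1) null by (simp add: T_def)
    from cInf_lower[OF this \<open>bdd_below T\<close>] \<open>\<not> Inf T \<le> d\<close> show False
      by simp
  qed
  moreover have "d \<le> Inf T"
  proof (rule cInf_greatest)
    show "T \<noteq> {}"
      using \<open>d + 1 \<in> T\<close> by blast
    show "d \<le> s" if "s \<in> T" for s
      using that pos[of s] by (force simp: T_def)
  qed
  ultimately show ?thesis
    unfolding hausdorff_dim_def T_def[symmetric] by simp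
qed

lemma diameter_le_hweight:
  assumes "bounded C" "diameter C \<le> 1" "0 \<le> s" "s \<le> 1"
  shows "ennreal (diameter C) \<le> hweight s C"
proof -
  have "diameter C \<le> diameter C powr s" if "s \<noteq> 0"
    using powr_mono'[of s 1 "diameter C"] assms diameter_ge_0[OF assms(1)] that by simp
  then show ?thesis
    using assms by (auto simp: hweight_def intro: ennreal_leI)
qed

lemma interval_length_le_diameter_sum:
  fixes C :: "nat \<Rightarrow> (real \<times> 'b::metric_space) set"
  assumes "{a..b} \<subseteq> fst ` (\<Union>i. C i)" "\<And>i. bounded (C i)"
  shows "ennreal (b - a) \<le> 2 * (\<Sum>i. ennreal (diameter (C i)))"
proof -
  define p where "p i = fst (SOME p. p \<in> C i)" for i
  define K where
    "K i = (if C i = {} then {} else {p i - diameter (C i) .. p i + diameter (C i)})" for i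
  have "{a..b} \<subseteq> (\<Union>i. K i)"
  proof
    fix x assume "x \<in> {a..b}"
    then obtain q i where "q \<in> C i" "fst q = x"
      using assms(1) by force
    moreover have "(SOME p. p \<in> C i) \<in> C i"
      using \<open>q \<in> C i\<close> by (rule someI)
    ultimately have "dist (fst q) (p i) \<le> diameter (C i)"
      unfolding p_def using assms(2) dist_fst_le diameter_bounded_bound
      by (blast intro: order_trans)
    then show "x \<in> (\<Union>i. K i)"
      using \<open>q \<in> C i\<close> \<open>fst q = x\<close> by (auto simp: K_def dist_real_def abs_le_iff)
  qed
  then have "emeasure lborel {a..b} \<le> emeasure lborel (\<Union>i. K i)"
    by (rule emeasure_mono) (auto simp: K_def)
  then have "ennreal (b - a) \<le> emeasure lborel (\<Union>i. K i)"
    by (cases "a \<le> b") (auto simp: ennreal_neg)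
  also have "\<dots> \<le> (\<Sum>i. emeasure lborel (K i))"
    by (rule emeasure_subadditive_countably) (auto simp: K_def)
  also have "\<dots> = (\<Sum>i. 2 * ennreal (diameter (C i)))"
    using diameter_ge_0[OF assms(2)] by (intro suminf_cong) (simp add: K_def ennreal_mult')
  also have "\<dots> = 2 * (\<Sum>i. ennreal (diameter (C i)))"
    by (rule ennreal_suminf_cmult)
  finally show ?thesis .
qed

lemma hausdorff_measure_ge_fst_image:
  fixes G :: "(real \<times> 'b::metric_space) set"
  assumes "{a..b} \<subseteq> fst ` G" "0 \<le> s" "s \<le> 1"
  shows "ennreal ((b - a) / 2) \<le> hausdorff_measure s G"
proof -
  have "ennreal ((b - a) / 2) \<le> (\<Sum>i. hweight s (C i))"
    if "G \<subseteq> (\<Union>i. C i)" and small: "\<And>i. bounded (C i) \<and> diameter (C i) \<le> 1" for C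
  proof -
    have "2 * ennreal ((b - a) / 2) = ennreal (b - a)"
      by (cases "a \<le> b") (simp_all add: numeral_mult_ennreal ennreal_neg)
    also have "\<dots> \<le> 2 * (\<Sum>i. ennreal (diameter (C i)))"
      using subset_trans[OF assms(1) image_mono[OF \<open>G \<subseteq> (\<Union>i. C i)\<close>]] small
      by (intro interval_length_le_diameter_sum) auto
    also have "\<dots> \<le> 2 * (\<Sum>i. hweight s (C i))"
      using small assms(2,3) by (intro mult_left_mono suminf_le diameter_le_hweight) auto
    finally show ?thesis
      by (simp add: ennreal_mult_le_mult_iff)
  qed
  then have "ennreal ((b - a) / 2) \<le> hausdorff_pre s 1 G"
    unfolding hausdorff_pre_def by (intro INF_greatest) auto
  also have "\<dots> \<le> hausdorff_measure s G"
    by (rule hausdorff_pre_le_measure) simp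
  finally show ?thesis .
qed

section \<open>A Vitali covering bound\<close>

lemma Vitali_covering_intervals:
  fixes K :: "(real \<times> real) set"
  assumes "\<And>i. i \<in> K \<Longrightarrow> fst i < snd i \<and> snd i - fst i \<le> r"
  obtains V where "countable V" "V \<subseteq> K" "pairwise (\<lambda>i j. disjnt {fst i..snd i} {fst j..snd j}) V"
    "\<And>i. i \<in> K \<Longrightarrow> \<exists>j\<in>V. \<not> disjnt {fst i..snd i} {fst j..snd j} \<and> snd i - fst i \<le> 5 * (snd j - fst j)"
proof -
  define ctr where "ctr i = (fst i + snd i) / 2" for i :: "real \<times> real"
  define rad where "rad i = (snd i - fst i) / 2" for i :: "real \<times> real"
  have cball_eq: "cball (ctr i) (rad i) = {fst i..snd i}" for i
    unfolding cball_eq_atLeastAtMost ctr_def rad_def by (simp add: field_simps)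
  have "0 < rad i \<and> rad i \<le> r" if "i \<in> K" for i
    using assms[OF that] by (auto simp: rad_def)
  then obtain V where V: "countable V" "V \<subseteq> K"
      "pairwise (\<lambda>i j. disjnt {fst i..snd i} {fst j..snd j}) V"
    and enlarged: "\<And>i. i \<in> K \<Longrightarrow> \<exists>j. j \<in> V \<and> \<not> disjnt {fst i..snd i} {fst j..snd j} \<and>
                     {fst i..snd i} \<subseteq> ball (ctr j) (5 * rad j)"
    using Vitali_covering_lemma_cballs_balls[of K rad r ctr, unfolded cball_eq] by blast
  have len_le: "snd i - fst i \<le> 5 * (snd j - fst j)"
    if "i \<in> K" "{fst i..snd i} \<subseteq> ball (ctr j) (5 * rad j)" for i j
  proof -
    have "dist (ctr j) (fst i) < 5 * rad j" "dist (ctr j) (snd i) < 5 * rad j"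
      using subsetD[OF that(2), of "fst i"] subsetD[OF that(2), of "snd i"] assms[OF that(1)]
      by auto
    then show ?thesis
      unfolding ctr_def rad_def dist_real_def by linarith
  qed
  show ?thesis
  proof (rule that[OF V])
    fix i assume "i \<in> K"
    then obtain j where "j \<in> V" "\<not> disjnt {fst i..snd i} {fst j..snd j}"
      "{fst i..snd i} \<subseteq> ball (ctr j) (5 * rad j)"
      using enlarged by blast
    then show "\<exists>j\<in>V. \<not> disjnt {fst i..snd i} {fst j..snd j} \<and> snd i - fst i \<le> 5 * (snd j - fst j)"
      using len_le[OF \<open>i \<in> K\<close>] by blast
  qed
qed

lemma nn_integral_interval_lengths_le:
  assumes "countable V" "pairwise (\<lambda>i j. disjnt {fst i..snd i} {fst j..snd j}) V"
    and bounds: "\<And>j. j \<in> V \<Longrightarrow> a \<le> fst j \<and> fst j \<le> snd j \<and> snd j \<le> b"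
  shows "(\<integral>\<^sup>+j. ennreal (snd j - fst j) \<partial>count_space V) \<le> ennreal (b - a)"
proof -
  have disjoint: "disjoint_family_on (\<lambda>j. {fst j..snd j}) V"
    using assms(2) unfolding disjoint_family_on_def pairwise_def disjnt_def by blast
  have "(\<integral>\<^sup>+j. ennreal (snd j - fst j) \<partial>count_space V) =
      (\<integral>\<^sup>+j. emeasure lborel {fst j..snd j} \<partial>count_space V)"
    using bounds by (intro nn_integral_cong) simp
  also have "\<dots> = emeasure lborel (\<Union>j\<in>V. {fst j..snd j})"
    by (rule emeasure_UN_countable[symmetric]) (use \<open>countable V\<close> disjoint in auto)
  also have "\<dots> \<le> emeasure lborel {a..b}"
  proof (rule emeasure_mono)
    show "(\<Union>j\<in>V. {fst j..snd j}) \<subseteq> {a..b}"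
      using bounds by fastforce
  qed simp
  also have "\<dots> = ennreal (b - a)"
    by (cases "a \<le> b") (simp_all add: ennreal_neg)
  finally show ?thesis .
qed

lemma hausdorff_pre_le_disjoint_intervals:
  fixes W :: "real \<times> real \<Rightarrow> 'a::metric_space set"
  assumes "countable V" "pairwise (\<lambda>i j. disjnt {fst i..snd i} {fst j..snd j}) V"
    and bounds: "\<And>j. j \<in> V \<Longrightarrow> a \<le> fst j \<and> fst j \<le> snd j \<and> snd j \<le> b"
    and "A \<subseteq> (\<Union>j\<in>V. W j)" "0 \<le> L" "0 \<le> \<delta>"
    and small: "\<And>j. j \<in> V \<Longrightarrow> bounded (W j) \<and> diameter (W j) \<le> L * (snd j - fst j)"
    and short: "\<And>j. j \<in> V \<Longrightarrow> L * (snd j - fst j) \<le> \<delta>"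
  shows "hausdorff_pre 1 \<delta> A \<le> ennreal (L * (b - a))"
proof -
  have "bounded (W j) \<and> diameter (W j) \<le> \<delta>" if "j \<in> V" for j
    using small[OF that] short[OF that] by linarith
  then have "hausdorff_pre 1 \<delta> A \<le> (\<integral>\<^sup>+j. hweight 1 (W j) \<partial>count_space V)"
    using \<open>countable V\<close> \<open>A \<subseteq> (\<Union>j\<in>V. W j)\<close> \<open>0 \<le> \<delta>\<close> by (intro hausdorff_pre_le_countable_cover)
  also have "\<dots> \<le> (\<integral>\<^sup>+j. ennreal L * ennreal (snd j - fst j) \<partial>count_space V)"
  proof (rule nn_integral_mono)
    fix j assume "j \<in> space (count_space V)"
    then show "hweight 1 (W j) \<le> ennreal L * ennreal (snd j - fst j)"
      using small[of j] bounds[of j] \<open>0 \<le> L\<close>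
      by (simp add: hweight_one ennreal_leI flip: ennreal_mult)
  qed
  also have "\<dots> = ennreal L * (\<integral>\<^sup>+j. ennreal (snd j - fst j) \<partial>count_space V)"
    by (rule nn_integral_cmult) simp
  also have "\<dots> \<le> ennreal L * ennreal (b - a)"
    using assms(1,2) bounds by (intro mult_left_mono nn_integral_interval_lengths_le) auto
  also have "\<dots> = ennreal (L * (b - a))"
    using \<open>0 \<le> L\<close> by (cases "a \<le> b") (simp_all add: ennreal_mult ennreal_neg mult_nonneg_nonpos)
  finally show ?thesis .
qed

lemma dist_le_if_intervals_meet:
  fixes g :: "real \<Rightarrow> 'a::metric_space"
  assumes near: "\<And>s u t. (s, u) \<in> K \<Longrightarrow> t \<in> S \<Longrightarrow> s \<le> t \<Longrightarrow> t \<le> u \<Longrightarrow> dist (g t) (g s) \<le> M * (u - s)"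
    and K: "\<And>s u. (s, u) \<in> K \<Longrightarrow> s \<in> S \<and> u \<in> S \<and> s < u" and "0 \<le> M"
    and "(s, u) \<in> K" "(s', u') \<in> K" "\<not> disjnt {s..u} {s'..u'}" "u - s \<le> 5 * (u' - s')"
    and "t \<in> S" "s \<le> t" "t \<le> u"
  shows "dist (g t) (g s') \<le> 11 * M * (u' - s')"
proof -
  define e where "e = max s s'"
  have "e \<in> S" "s \<le> e" "e \<le> u" "s' \<le> e" "e \<le> u'"
    using K[OF \<open>(s, u) \<in> K\<close>] K[OF \<open>(s', u') \<in> K\<close>] \<open>\<not> disjnt {s..u} {s'..u'}\<close>
    by (auto simp: e_def disjnt_def max_def)
  then have "dist (g t) (g s) \<le> M * (u - s)" "dist (g e) (g s) \<le> M * (u - s)"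
    "dist (g e) (g s') \<le> M * (u' - s')"
    using near[OF \<open>(s, u) \<in> K\<close>] near[OF \<open>(s', u') \<in> K\<close>] assms(8-10) by auto
  moreover have "dist (g t) (g s') \<le> dist (g t) (g s) + dist (g e) (g s) + dist (g e) (g s')"
    using dist_triangle[of "g t" "g s'" "g s"] dist_triangle3[of "g s" "g s'" "g e"] by linarith
  moreover have "M * (u - s) \<le> M * (5 * (u' - s'))"
    using \<open>u - s \<le> 5 * (u' - s')\<close> \<open>0 \<le> M\<close> by (rule mult_left_mono)
  ultimately show ?thesis
    by (simp add: algebra_simps)
qed

lemma bounded_diameter_image_meeting_intervals:
  fixes g :: "real \<Rightarrow> 'a::metric_space" and S :: "real set" and K :: "(real \<times> real) set"
    and s' u' :: real
  defines "W \<equiv> g ` {t \<in> S. \<exists>(s, u)\<in>K. s \<le> t \<and> t \<le> u \<and>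
                      \<not> disjnt {s..u} {s'..u'} \<and> u - s \<le> 5 * (u' - s')}"
  assumes near: "\<And>s u t. (s, u) \<in> K \<Longrightarrow> t \<in> S \<Longrightarrow> s \<le> t \<Longrightarrow> t \<le> u \<Longrightarrow> dist (g t) (g s) \<le> M * (u - s)"
    and K: "\<And>s u. (s, u) \<in> K \<Longrightarrow> s \<in> S \<and> u \<in> S \<and> s < u" and "0 \<le> M" "(s', u') \<in> K"
  shows "bounded W \<and> diameter W \<le> 22 * M * (u' - s')"
proof (rule bounded_diameter_le)
  have near_s': "dist p (g s') \<le> 11 * M * (u' - s')" if "p \<in> W" for p
  proof -
    obtain t s u where "p = g t" "t \<in> S" "(s, u) \<in> K" "s \<le> t" "t \<le> u"
      "\<not> disjnt {s..u} {s'..u'}" "u - s \<le> 5 * (u' - s')"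
      using \<open>p \<in> W\<close> unfolding W_def by blast
    then show ?thesis
      using dist_le_if_intervals_meet[OF near K \<open>0 \<le> M\<close>] \<open>(s', u') \<in> K\<close> by blast
  qed
  show "dist p q \<le> 22 * M * (u' - s')" if "p \<in> W" "q \<in> W" for p q
    using near_s'[OF that(1)] near_s'[OF that(2)] dist_triangle2[of p q "g s'"] by simp
  show "0 \<le> 22 * M * (u' - s')"
    using K[OF \<open>(s', u') \<in> K\<close>] \<open>0 \<le> M\<close> by simp
qed

lemma hausdorff_pre_image_le_Vitali:
  fixes g :: "real \<Rightarrow> 'a::metric_space" and K :: "(real \<times> real) set"
  assumes "S \<subseteq> {a..b}" "0 < r" "0 \<le> M"
    and K: "\<And>s u. (s, u) \<in> K \<Longrightarrow> s \<in> S \<and> u \<in> S \<and> s < u \<and> u - s \<le> r"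
    and near: "\<And>s u t. (s, u) \<in> K \<Longrightarrow> t \<in> S \<Longrightarrow> s \<le> t \<Longrightarrow> t \<le> u \<Longrightarrow> dist (g t) (g s) \<le> M * (u - s)"
    and "Z \<subseteq> S" and Z: "\<And>x. x \<in> Z \<Longrightarrow> \<exists>(s, u)\<in>K. s \<le> x \<and> x \<le> u"
  shows "hausdorff_pre 1 (22 * M * r) (g ` Z) \<le> ennreal (22 * M * (b - a))"
proof -
  have K': "fst i \<in> S \<and> snd i \<in> S \<and> fst i < snd i \<and> snd i - fst i \<le> r" if "i \<in> K" for i
    using K[of "fst i" "snd i"] that by simp
  obtain V where "countable V" "V \<subseteq> K"
    and disjoint: "pairwise (\<lambda>i j. disjnt {fst i..snd i} {fst j..snd j}) V"
    and enlarged: "\<And>i. i \<in> K \<Longrightarrow> \<exists>j\<in>V. \<not> disjnt {fst i..snd i} {fst j..snd j} \<and>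
                     snd i - fst i \<le> 5 * (snd j - fst j)"
    by (rule Vitali_covering_intervals[of K r]) (use K' in auto)
  define W where "W j = g ` {t \<in> S. \<exists>(s, u)\<in>K. s \<le> t \<and> t \<le> u \<and>
     \<not> disjnt {s..u} {fst j..snd j} \<and> u - s \<le> 5 * (snd j - fst j)}" for j
  show ?thesis
  proof (rule hausdorff_pre_le_disjoint_intervals[OF \<open>countable V\<close> disjoint])
    fix j assume "j \<in> V"
    then have "j \<in> K"
      using \<open>V \<subseteq> K\<close> by blast
    then show "a \<le> fst j \<and> fst j \<le> snd j \<and> snd j \<le> b"
      using K'[OF \<open>j \<in> K\<close>] \<open>S \<subseteq> {a..b}\<close> by (auto simp: subset_iff)
    show "bounded (W j) \<and> diameter (W j) \<le> 22 * M * (snd j - fst j)"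
      unfolding W_def using near K \<open>0 \<le> M\<close> \<open>j \<in> K\<close>
      by (intro bounded_diameter_image_meeting_intervals[where K = K]) auto
    show "22 * M * (snd j - fst j) \<le> 22 * M * r"
      using K'[OF \<open>j \<in> K\<close>] \<open>0 \<le> M\<close> by (simp add: mult_left_mono)
  next
    show "g ` Z \<subseteq> (\<Union>j\<in>V. W j)"
    proof
      fix p assume "p \<in> g ` Z"
      then obtain x s u where "p = g x" "x \<in> Z" "(s, u) \<in> K" "s \<le> x" "x \<le> u"
        using Z by blast
      moreover obtain j where "j \<in> V" "\<not> disjnt {s..u} {fst j..snd j}" "u - s \<le> 5 * (snd j - fst j)"
        using enlarged[OF \<open>(s, u) \<in> K\<close>] by auto
      ultimately show "p \<in> (\<Union>j\<in>V. W j)"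
        using \<open>Z \<subseteq> S\<close> unfolding W_def by blast
    qed
  qed (use \<open>0 \<le> M\<close> \<open>0 < r\<close> in auto)
qed

section \<open>Graphs that are monotone along the real line\<close>

abbreviation graph :: "('a \<Rightarrow> 'b) \<Rightarrow> 'a set \<Rightarrow> ('a \<times> 'b) set" where
  "graph f S \<equiv> (\<lambda>x. (x, f x)) ` S"

definition monotone_along :: "(real \<Rightarrow> 'a::metric_space) \<Rightarrow> real set \<Rightarrow> real \<Rightarrow> bool" where
  "monotone_along g S C \<longleftrightarrow>
     (\<forall>s\<in>S. \<forall>t\<in>S. \<forall>u\<in>S. s < t \<longrightarrow> t < u \<longrightarrow> dist (g s) (g t) \<le> C * dist (g s) (g u))"

lemma monotone_along_mono: "monotone_along g S C \<Longrightarrow> C \<le> C' \<Longrightarrow> monotone_along g S C'"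
  unfolding monotone_along_def by (meson mult_right_mono order_trans zero_le_dist)

lemma dist_Pair_le_add: "dist (a, b) (c, d) \<le> dist a c + dist b d"
  unfolding dist_Pair_Pair by (rule sqrt_sum_squares_le_sum) auto

lemma ex_strip_index:
  fixes y m h :: real
  assumes "\<bar>y\<bar> \<le> m" "0 < h"
  shows "\<exists>j < nat \<lceil>2 * m / h\<rceil> + 1. -m + real j * h \<le> y \<and> y \<le> -m + (real j + 1) * h"
proof -
  define j where "j = nat \<lfloor>(y + m) / h\<rfloor>"
  have "0 \<le> (y + m) / h" "(y + m) / h \<le> 2 * m / h"
    using assms by (simp_all add: divide_right_mono)
  then have "real j \<le> (y + m) / h" "(y + m) / h < real j + 1" "j < nat \<lceil>2 * m / h\<rceil> + 1"
    unfolding j_def by linarith+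
  then show ?thesis
    using \<open>0 < h\<close> by (auto simp: field_simps)
qed

lemma hausdorff_pre_graph_le_if_expanding:
  fixes f :: "real \<Rightarrow> real"
  assumes expanding: "\<And>x y. x \<in> P \<Longrightarrow> y \<in> P \<Longrightarrow> \<bar>x - y\<bar> \<le> \<bar>f x - f y\<bar>"
    and m: "\<And>x. x \<in> P \<Longrightarrow> \<bar>f x\<bar> \<le> m" and "0 \<le> m" "0 < h"
  shows "hausdorff_pre 1 (2 * h) (graph f P) \<le> ennreal (4 * m + 4 * h)"
proof -
  define N where "N = nat \<lceil>2 * m / h\<rceil> + 1"
  define Q where "Q j = graph f {x \<in> P. -m + real j * h \<le> f x \<and> f x \<le> -m + (real j + 1) * h}" for j
  have Q_small: "bounded (Q j) \<and> diameter (Q j) \<le> 2 * h" for j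
  proof (rule bounded_diameter_le)
    fix p q assume "p \<in> Q j" "q \<in> Q j"
    then obtain x y where "p = (x, f x)" "q = (y, f y)" "x \<in> P" "y \<in> P" and "\<bar>f x - f y\<bar> \<le> h"
      unfolding Q_def by (auto simp: abs_le_iff algebra_simps)
    then show "dist p q \<le> 2 * h"
      using dist_Pair_le_add[of x "f x" y "f y"] expanding[of x y] by (simp add: dist_real_def)
  qed (use \<open>h > 0\<close> in simp)
  have "graph f P \<subseteq> (\<Union>j<N. Q j)"
  proof
    fix p assume "p \<in> graph f P"
    then obtain x where "x \<in> P" "p = (x, f x)"
      by blast
    moreover obtain j where "j < N" "-m + real j * h \<le> f x" "f x \<le> -m + (real j + 1) * h"
      using ex_strip_index[OF m[OF \<open>x \<in> P\<close>] \<open>0 < h\<close>] unfolding N_def by blast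
    ultimately show "p \<in> (\<Union>j<N. Q j)"
      unfolding Q_def by blast
  qed
  then have "hausdorff_pre 1 (2 * h) (graph f P) \<le> (\<Sum>j<N. hweight 1 (Q j))"
    using Q_small \<open>h > 0\<close> by (intro hausdorff_pre_le_finite_cover) auto
  also have "\<dots> \<le> (\<Sum>j<N. ennreal (2 * h))"
    using Q_small by (intro sum_mono) (simp add: hweight_one ennreal_leI)
  also have "\<dots> = ennreal (real N * (2 * h))"
    using \<open>h > 0\<close> by (simp add: ennreal_mult ennreal_of_nat_eq_real_of_nat)
  also have "\<dots> \<le> ennreal (4 * m + 4 * h)"
  proof (rule ennreal_leI)
    have "real N \<le> 2 * m / h + 2"
      unfolding N_def using \<open>0 \<le> m\<close> \<open>h > 0\<close> by (simp add: of_nat_nat) linarith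
    then have "real N * (2 * h) \<le> (2 * m / h + 2) * (2 * h)"
      using \<open>h > 0\<close> by (intro mult_right_mono) auto
    also have "\<dots> = 4 * m + 4 * h"
      using \<open>h > 0\<close> by (simp add: field_simps)
    finally show "real N * (2 * h) \<le> 4 * m + 4 * h" .
  qed
  finally show ?thesis .
qed

lemma hausdorff_measure_graph_finite_if_expanding:
  fixes f :: "real \<Rightarrow> real"
  assumes "\<And>x y. x \<in> P \<Longrightarrow> y \<in> P \<Longrightarrow> \<bar>x - y\<bar> \<le> \<bar>f x - f y\<bar>" "bounded (f ` P)"
  shows "hausdorff_measure 1 (graph f P) < \<infinity>"
proof -
  obtain m where "m > 0" and m: "\<And>x. x \<in> P \<Longrightarrow> \<bar>f x\<bar> \<le> m"
    using \<open>bounded (f ` P)\<close> unfolding bounded_pos by auto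
  have "hausdorff_pre 1 \<delta> (graph f P) \<le> ennreal (4 * m + 2)" if "\<delta> > 0" for \<delta>
  proof -
    define h where "h = min \<delta> 1 / 2"
    have "h > 0" "2 * h \<le> \<delta>" "4 * h \<le> 2"
      using that by (auto simp: h_def)
    have "hausdorff_pre 1 \<delta> (graph f P) \<le> hausdorff_pre 1 (2 * h) (graph f P)"
      using \<open>2 * h \<le> \<delta>\<close> by (rule hausdorff_pre_antimono)
    also have "\<dots> \<le> ennreal (4 * m + 4 * h)"
      using assms(1) m \<open>m > 0\<close> \<open>h > 0\<close> by (intro hausdorff_pre_graph_le_if_expanding) auto
    also have "\<dots> \<le> ennreal (4 * m + 2)"
      using \<open>4 * h \<le> 2\<close> by (intro ennreal_leI) simp
    finally show ?thesis .
  qed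
  then have "hausdorff_measure 1 (graph f P) \<le> ennreal (4 * m + 2)"
    by (rule hausdorff_measure_le)
  then show ?thesis
    using order.strict_trans1 by fastforce
qed

lemma sigma_finite_hausdorff_graph_if_locally_expanding:
  fixes f :: "real \<Rightarrow> real"
  assumes "0 < r" and expanding: "\<And>x y. x \<in> P \<Longrightarrow> y \<in> P \<Longrightarrow> \<bar>x - y\<bar> \<le> r \<Longrightarrow> \<bar>x - y\<bar> \<le> \<bar>f x - f y\<bar>"
  shows "sigma_finite_hausdorff 1 (graph f P)"
proof -
  define Q where "Q = (\<lambda>(k :: int, m :: nat). {x \<in> P. k * r \<le> x \<and> x \<le> (k + 1) * r \<and> \<bar>f x\<bar> \<le> m})"
  have "P \<subseteq> (\<Union>km. Q km)"
  proof
    fix x assume "x \<in> P"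
    define k where "k = \<lfloor>x / r\<rfloor>"
    have "k \<le> x / r" "x / r \<le> k + 1"
      unfolding k_def by linarith+
    then have "k * r \<le> x" "x \<le> (k + 1) * r"
      using \<open>0 < r\<close> by (simp_all add: field_simps)
    moreover have "\<bar>f x\<bar> \<le> real (nat \<lceil>\<bar>f x\<bar>\<rceil>)"
      by linarith
    ultimately have "x \<in> Q (k, nat \<lceil>\<bar>f x\<bar>\<rceil>)"
      using \<open>x \<in> P\<close> by (simp add: Q_def)
    then show "x \<in> (\<Union>km. Q km)"
      by blast
  qed
  moreover have "Q km \<subseteq> P" for km
    by (auto simp: Q_def split: prod.splits)
  ultimately have "P = (\<Union>km. Q km)"
    by blast
  then have "graph f P = (\<Union>km. graph f (Q km))"
    by blast
  moreover have "hausdorff_measure 1 (graph f (Q km)) < \<infinity>" for km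
  proof (rule hausdorff_measure_graph_finite_if_expanding)
    obtain k m where km: "km = (k, m)"
      by fastforce
    show "\<bar>x - y\<bar> \<le> \<bar>f x - f y\<bar>" if "x \<in> Q km" "y \<in> Q km" for x y
      using that expanding[of x y] by (auto simp: Q_def km abs_le_iff algebra_simps)
    show "bounded (f ` Q km)"
      unfolding bounded_real by (auto simp: Q_def km)
  qed
  ultimately show ?thesis
    by (simp add: sigma_finite_hausdorff_UN_countable sigma_finite_hausdorff_if_finite)
qed

lemma dist_graph_le_if_flat_chord:
  fixes f :: "real \<Rightarrow> real"
  assumes "monotone_along (\<lambda>x. (x, f x)) S C" "1 \<le> C"
    and "s \<in> S" "u \<in> S" "\<bar>f u - f s\<bar> < u - s" "t \<in> S" "s \<le> t" "t \<le> u"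
  shows "dist (t, f t) (s, f s) \<le> 2 * C * (u - s)"
proof -
  have "dist (s, f s) (u, f u) \<le> 2 * (u - s)"
    using dist_Pair_le_add[of s "f s" u "f u"] assms(5)
    by (simp add: dist_real_def abs_minus_commute)
  then have "C * dist (s, f s) (u, f u) \<le> 2 * C * (u - s)"
    using \<open>1 \<le> C\<close> mult_left_mono[of _ _ C] by fastforce
  moreover have "dist (s, f s) (t, f t) \<le> C * dist (s, f s) (u, f u)"
  proof (cases "s < t \<and> t < u")
    case True
    then show ?thesis
      using assms(1,3,4,6) unfolding monotone_along_def by blast
  next
    case False
    then have "t = s \<or> t = u"
      using assms(7,8) by auto
    then show ?thesis
      using \<open>1 \<le> C\<close> by (auto intro: mult_le_cancel_right1[THEN iffD2])
  qed
  ultimately show ?thesis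
    by (simp add: dist_commute)
qed

lemma hausdorff_measure_graph_finite_if_flat_chords:
  fixes f :: "real \<Rightarrow> real"
  assumes "monotone_along (\<lambda>x. (x, f x)) S C" "1 \<le> C" "Z \<subseteq> S \<inter> {a..b}"
    and flat: "\<And>x \<epsilon>. x \<in> Z \<Longrightarrow> \<epsilon> > 0 \<Longrightarrow>
      \<exists>s\<in>S. \<exists>u\<in>S. s \<le> x \<and> x \<le> u \<and> u - s < \<epsilon> \<and> \<bar>f u - f s\<bar> < u - s"
  shows "hausdorff_measure 1 (graph f Z) < \<infinity>"
proof -
  have "hausdorff_pre 1 \<delta> (graph f Z) \<le> ennreal (44 * C * (b - a + 2))" if "\<delta> > 0" for \<delta>
  proof -
    define r where "r = min 1 (\<delta> / (44 * C))"
    define S' where "S' = S \<inter> {a - 1..b + 1}"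
    define K where "K = {(s, u). s \<in> S' \<and> u \<in> S' \<and> s < u \<and> u - s \<le> r \<and> \<bar>f u - f s\<bar> < u - s}"
    have "0 < r" "r \<le> 1" "44 * C * r \<le> \<delta>"
      using \<open>\<delta> > 0\<close> \<open>1 \<le> C\<close> by (auto simp: r_def field_simps min_def)
    have chords: "s \<in> S' \<and> u \<in> S' \<and> s < u \<and> u - s \<le> r" if "(s, u) \<in> K" for s u
      using that by (simp add: K_def)
    have near: "dist (t, f t) (s, f s) \<le> (2 * C) * (u - s)"
      if "(s, u) \<in> K" "t \<in> S'" "s \<le> t" "t \<le> u" for s u t
      using that dist_graph_le_if_flat_chord[OF assms(1,2)] by (simp add: K_def S'_def)
    have "Z \<subseteq> S'"
      using \<open>Z \<subseteq> S \<inter> {a..b}\<close> by (auto simp: S'_def)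
    have cover: "\<exists>(s, u)\<in>K. s \<le> x \<and> x \<le> u" if "x \<in> Z" for x
    proof -
      obtain s u where "s \<in> S" "u \<in> S" "s \<le> x" "x \<le> u" "u - s < r" "\<bar>f u - f s\<bar> < u - s"
        using flat[OF \<open>x \<in> Z\<close> \<open>0 < r\<close>] by blast
      moreover have "a \<le> x" "x \<le> b"
        using \<open>x \<in> Z\<close> \<open>Z \<subseteq> S \<inter> {a..b}\<close> by auto
      ultimately have "(s, u) \<in> K"
        using \<open>r \<le> 1\<close> by (auto simp: K_def S'_def)
      then show ?thesis
        using \<open>s \<le> x\<close> \<open>x \<le> u\<close> by blast
    qed
    have "S' \<subseteq> {a - 1..b + 1}" "0 \<le> 2 * C"
      using \<open>1 \<le> C\<close> by (auto simp: S'_def)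
    then have "hausdorff_pre 1 (22 * (2 * C) * r) (graph f Z)
        \<le> ennreal (22 * (2 * C) * (b + 1 - (a - 1)))"
      using hausdorff_pre_image_le_Vitali[of S' "a - 1" "b + 1" r "2 * C" K "\<lambda>x. (x, f x)" Z]
        \<open>0 < r\<close> chords near \<open>Z \<subseteq> S'\<close> cover
      by blast
    moreover have "hausdorff_pre 1 \<delta> (graph f Z) \<le> hausdorff_pre 1 (22 * (2 * C) * r) (graph f Z)"
      using \<open>44 * C * r \<le> \<delta>\<close> by (intro hausdorff_pre_antimono) simp
    ultimately show ?thesis
      by (simp add: algebra_simps)
  qed
  then have "hausdorff_measure 1 (graph f Z) \<le> ennreal (44 * C * (b - a + 2))"
    by (rule hausdorff_measure_le)
  then show ?thesis
    using order.strict_trans1 by fastforce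
qed

definition flat_chord_points :: "(real \<Rightarrow> real) \<Rightarrow> real set \<Rightarrow> real set" where
  "flat_chord_points f S =
     {x \<in> S. \<forall>\<epsilon>>0. \<exists>s\<in>S. \<exists>u\<in>S. s \<le> x \<and> x \<le> u \<and> u - s < \<epsilon> \<and> \<bar>f u - f s\<bar> < u - s}"

definition steep_points :: "(real \<Rightarrow> real) \<Rightarrow> real set \<Rightarrow> real \<Rightarrow> real set" where
  "steep_points f S r = {x \<in> S. \<forall>s\<in>S. \<forall>u\<in>S. s \<le> x \<and> x \<le> u \<and> u - s \<le> r \<longrightarrow> u - s \<le> \<bar>f u - f s\<bar>}"

lemma subset_flat_chord_points_Un_steep_points:
  "S \<subseteq> flat_chord_points f S \<union> (\<Union>n. steep_points f S (inverse (Suc n)))"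
proof (rule subsetI, rule ccontr)
  fix x assume "x \<in> S" and x: "x \<notin> flat_chord_points f S \<union> (\<Union>n. steep_points f S (inverse (Suc n)))"
  then obtain \<epsilon> where "\<epsilon> > 0"
    and no_flat: "\<not> (\<exists>s\<in>S. \<exists>u\<in>S. s \<le> x \<and> x \<le> u \<and> u - s < \<epsilon> \<and> \<bar>f u - f s\<bar> < u - s)"
    unfolding flat_chord_points_def by blast
  obtain n where "inverse (Suc n) < \<epsilon>"
    using reals_Archimedean[OF \<open>\<epsilon> > 0\<close>] by blast
  have "u - s \<le> \<bar>f u - f s\<bar>" if "s \<in> S" "u \<in> S" "s \<le> x" "x \<le> u" "u - s \<le> inverse (Suc n)" for s u
    using no_flat that \<open>inverse (Suc n) < \<epsilon>\<close> by (meson not_less order_le_less_trans)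
  then have "x \<in> steep_points f S (inverse (Suc n))"
    using \<open>x \<in> S\<close> unfolding steep_points_def by blast
  with x show False
    by blast
qed

lemma sigma_finite_hausdorff_graph_flat_chord_points:
  fixes f :: "real \<Rightarrow> real"
  assumes "monotone_along (\<lambda>x. (x, f x)) S C" "1 \<le> C"
  shows "sigma_finite_hausdorff 1 (graph f (flat_chord_points f S))"
proof -
  define Z where "Z = flat_chord_points f S"
  have "Z = (\<Union>j. Z \<inter> {-real j..real j})"
  proof (intro subset_antisym subsetI)
    fix x assume "x \<in> Z"
    then have "x \<in> Z \<inter> {-real (nat \<lceil>\<bar>x\<bar>\<rceil>)..real (nat \<lceil>\<bar>x\<bar>\<rceil>)}"
      by (simp add: abs_le_iff[symmetric]) linarith
    then show "x \<in> (\<Union>j. Z \<inter> {-real j..real j})"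
      by blast
  qed blast
  then have "graph f Z = (\<Union>j. graph f (Z \<inter> {-real j..real j}))"
    by blast
  moreover have "hausdorff_measure 1 (graph f (Z \<inter> {-real j..real j})) < \<infinity>" for j
    using assms by (intro hausdorff_measure_graph_finite_if_flat_chords[where S = S])
      (auto simp: Z_def flat_chord_points_def)
  ultimately show ?thesis
    unfolding Z_def by (simp add: sigma_finite_hausdorff_UN sigma_finite_hausdorff_if_finite)
qed

lemma sigma_finite_hausdorff_graph_steep_points:
  fixes f :: "real \<Rightarrow> real"
  assumes "0 < r"
  shows "sigma_finite_hausdorff 1 (graph f (steep_points f S r))"
proof (rule sigma_finite_hausdorff_graph_if_locally_expanding[OF \<open>0 < r\<close>])
  have expand: "u - s \<le> \<bar>f u - f s\<bar>"
    if "s \<in> steep_points f S r" "u \<in> steep_points f S r" "s \<le> u" "u - s \<le> r" for s u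
    using that unfolding steep_points_def by force
  show "\<bar>x - y\<bar> \<le> \<bar>f x - f y\<bar>"
    if "x \<in> steep_points f S r" "y \<in> steep_points f S r" "\<bar>x - y\<bar> \<le> r" for x y
    using expand[of x y] expand[of y x] that by (cases "x \<le> y") (simp_all add: abs_minus_commute)
qed

lemma sigma_finite_hausdorff_graph_if_monotone_along:
  fixes f :: "real \<Rightarrow> real"
  assumes "monotone_along (\<lambda>x. (x, f x)) S C"
  shows "sigma_finite_hausdorff 1 (graph f S)"
proof -
  have "S = flat_chord_points f S \<union> (\<Union>n. steep_points f S (inverse (Suc n)))"
    using subset_flat_chord_points_Un_steep_points[of S f]
    by (auto simp: flat_chord_points_def steep_points_def)
  then have "graph f S = graph f (flat_chord_points f S \<union> (\<Union>n. steep_points f S (inverse (Suc n))))"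
    by (rule arg_cong)
  also have "\<dots> = graph f (flat_chord_points f S) \<union>
      (\<Union>n. graph f (steep_points f S (inverse (Suc n))))"
    by (simp only: image_Un image_UN)
  finally have "graph f S = \<dots>" .
  moreover have "monotone_along (\<lambda>x. (x, f x)) S (max C 1)"
    using assms by (rule monotone_along_mono) simp
  ultimately show ?thesis
    by (simp add: sigma_finite_hausdorff_Un sigma_finite_hausdorff_UN
        sigma_finite_hausdorff_graph_flat_chord_points sigma_finite_hausdorff_graph_steep_points)
qed

section \<open>Monotone orders\<close>

definition monotone_order :: "'a::metric_space set \<Rightarrow> 'a rel \<Rightarrow> real \<Rightarrow> bool" where
  "monotone_order X r c \<longleftrightarrow> linear_order_on X r \<and>
     (\<forall>x\<in>X. \<forall>y\<in>X. \<forall>z\<in>X. (x, y) \<in> r \<and> x \<noteq> y \<and> (y, z) \<in> r \<and> y \<noteq> z \<longrightarrow> dist x y \<le> c * dist x z)"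

lemma monotone_metric_iff: "monotone_metric X \<longleftrightarrow> (\<exists>r c. c > 0 \<and> monotone_order X r c)"
  unfolding monotone_metric_def monotone_order_def by auto

lemma monotone_orderD:
  "monotone_order X r c \<Longrightarrow> x \<in> X \<Longrightarrow> y \<in> X \<Longrightarrow> z \<in> X \<Longrightarrow> (x, y) \<in> r \<Longrightarrow> (y, z) \<in> r \<Longrightarrow>
    x \<noteq> y \<Longrightarrow> y \<noteq> z \<Longrightarrow> dist x y \<le> c * dist x z"
  unfolding monotone_order_def by blast

lemma dist_le_if_between:
  assumes "monotone_order X r c" "a \<in> X" "b \<in> X" "p \<in> X" "a \<noteq> p" "p \<noteq> b"
    and "(a, p) \<in> r \<and> (p, b) \<in> r \<or> (b, p) \<in> r \<and> (p, a) \<in> r"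
  shows "dist a p \<le> (c + 1) * dist a b"
  using assms(7)
proof
  assume "(a, p) \<in> r \<and> (p, b) \<in> r"
  then have "dist a p \<le> c * dist a b"
    using monotone_orderD[OF assms(1) assms(2) assms(4) assms(3)] assms(5,6) by blast
  then show ?thesis
    unfolding distrib_right using zero_le_dist[of a b] by linarith
next
  assume "(b, p) \<in> r \<and> (p, a) \<in> r"
  then have "dist b p \<le> c * dist b a"
    using monotone_orderD[OF assms(1) assms(3) assms(4) assms(2)] assms(5,6) by blast
  then show ?thesis
    using dist_triangle[of a p b] by (simp add: dist_commute distrib_right)
qed

lemma openin_Collect_if_separated:
  fixes A :: "'a::metric_space set"
  assumes "p \<notin> A" "0 < k"
    and sep: "\<And>a b. a \<in> A \<Longrightarrow> b \<in> A \<Longrightarrow> P a \<Longrightarrow> \<not> P b \<Longrightarrow> dist a p \<le> k * dist a b"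
  shows "openin (top_of_set A) {a \<in> A. P a}"
  unfolding openin_euclidean_subtopology_iff
proof (intro conjI ballI)
  fix a assume a: "a \<in> {a \<in> A. P a}"
  define e where "e = dist a p / k"
  have "0 < e"
    using a \<open>p \<notin> A\<close> \<open>0 < k\<close> by (auto simp: e_def intro!: divide_pos_pos)
  moreover have "b \<in> {a \<in> A. P a}" if "b \<in> A" "dist b a < e" for b
  proof (rule ccontr)
    assume "b \<notin> {a \<in> A. P a}"
    then have "dist a p \<le> k * dist a b"
      using sep a that(1) by auto
    also have "\<dots> < k * e"
      using that(2) \<open>0 < k\<close> by (simp add: dist_commute)
    also have "\<dots> = dist a p"
      using \<open>0 < k\<close> by (simp add: e_def)
    finally show False
      by simp
  qed
  ultimately show "\<exists>e>0. \<forall>b\<in>A. dist b a < e \<longrightarrow> b \<in> {a \<in> A. P a}"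
    by blast
qed auto

lemma connected_one_side_if_monotone_order:
  assumes mono: "monotone_order X r c" and "0 \<le> c"
    and "A \<subseteq> X" "connected A" "p \<in> X" "p \<notin> A"
  shows "(\<forall>a\<in>A. (p, a) \<in> r) \<or> (\<forall>a\<in>A. (a, p) \<in> r)"
proof -
  have "linear_order_on X r"
    using mono by (simp add: monotone_order_def)
  then have "total_on X r" "antisym r"
    unfolding linear_order_on_def partial_order_on_def by simp_all
  have total: "(a, p) \<in> r \<or> (p, a) \<in> r" if "a \<in> A" for a
  proof -
    have "a \<in> X" "a \<noteq> p"
      using that \<open>A \<subseteq> X\<close> \<open>p \<notin> A\<close> by auto
    then show ?thesis
      using \<open>total_on X r\<close> \<open>p \<in> X\<close> unfolding total_on_def by blast
  qed
  have not_both: "\<not> ((a, p) \<in> r \<and> (p, a) \<in> r)" if "a \<in> A" for a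
    using antisymD[OF \<open>antisym r\<close>, of a p] \<open>p \<notin> A\<close> that by blast
  have between: "dist a p \<le> (c + 1) * dist a b"
    if "a \<in> A" "b \<in> A" "(a, p) \<in> r \<and> (p, b) \<in> r \<or> (b, p) \<in> r \<and> (p, a) \<in> r" for a b
  proof (rule dist_le_if_between[OF mono _ _ \<open>p \<in> X\<close>])
    show "a \<in> X" "b \<in> X" "a \<noteq> p" "p \<noteq> b"
      using that(1,2) \<open>A \<subseteq> X\<close> \<open>p \<notin> A\<close> by auto
  qed (fact that(3))
  have "openin (top_of_set A) {a \<in> A. (p, a) \<in> r}"
    by (rule openin_Collect_if_separated[OF \<open>p \<notin> A\<close>]) (use \<open>0 \<le> c\<close> between total in auto)
  moreover have "openin (top_of_set A) {a \<in> A. (a, p) \<in> r}"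
    by (rule openin_Collect_if_separated[OF \<open>p \<notin> A\<close>]) (use \<open>0 \<le> c\<close> between total in auto)
  moreover have "A \<subseteq> {a \<in> A. (p, a) \<in> r} \<union> {a \<in> A. (a, p) \<in> r}"
    using total by blast
  moreover have "{a \<in> A. (p, a) \<in> r} \<inter> {a \<in> A. (a, p) \<in> r} = {}"
    using not_both by blast
  ultimately have "{a \<in> A. (p, a) \<in> r} = {} \<or> {a \<in> A. (a, p) \<in> r} = {}"
    using \<open>connected A\<close> unfolding connected_openin by blast
  then show ?thesis
    using total by blast
qed

lemma monotone_along_if_order_preserving:
  assumes "monotone_order X r c" "g ` S \<subseteq> X" "inj_on g S"
    and "\<And>s t. s \<in> S \<Longrightarrow> t \<in> S \<Longrightarrow> s < t \<Longrightarrow> (g s, g t) \<in> r"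
  shows "monotone_along g S c"
  unfolding monotone_along_def
proof (intro ballI impI)
  fix s t u assume "s \<in> S" "t \<in> S" "u \<in> S" "s < t" "t < u"
  moreover from this have "g s \<noteq> g t" "g t \<noteq> g u"
    using \<open>inj_on g S\<close> by (auto dest: inj_onD)
  ultimately show "dist (g s) (g t) \<le> c * dist (g s) (g u)"
    using assms(2,4) by (intro monotone_orderD[OF assms(1)]) auto
qed

lemma monotone_along_if_order_reversing:
  assumes "monotone_order X r c" "g ` S \<subseteq> X" "inj_on g S"
    and "\<And>s t. s \<in> S \<Longrightarrow> t \<in> S \<Longrightarrow> s < t \<Longrightarrow> (g t, g s) \<in> r"
  shows "monotone_along g S (c + 1)"
  unfolding monotone_along_def
proof (intro ballI impI)
  fix s t u assume "s \<in> S" "t \<in> S" "u \<in> S" "s < t" "t < u"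
  moreover from this have "g u \<noteq> g t" "g t \<noteq> g s"
    using \<open>inj_on g S\<close> by (auto dest: inj_onD)
  ultimately have "dist (g u) (g t) \<le> c * dist (g u) (g s)"
    using assms(2,4) by (intro monotone_orderD[OF assms(1)]) auto
  then show "dist (g s) (g t) \<le> (c + 1) * dist (g s) (g u)"
    using dist_triangle[of "g s" "g t" "g u"] by (simp add: dist_commute algebra_simps)
qed

section \<open>Graphs of continuous functions\<close>

lemma monotone_order_graph_left_side:
  fixes f :: "real \<Rightarrow> real"
  assumes mono: "monotone_order (graph f I) r c" "0 \<le> c"
    and "is_interval I" "continuous_on I f" "x \<in> I"
  shows "(\<forall>y\<in>I. y < x \<longrightarrow> ((y, f y), (x, f x)) \<in> r) \<or> (\<forall>y\<in>I. y < x \<longrightarrow> ((x, f x), (y, f y)) \<in> r)"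
proof -
  have "continuous_on (I \<inter> {..<x}) (\<lambda>x. (x, f x))"
    by (intro continuous_on_Pair continuous_on_id continuous_on_subset[OF assms(4)]) auto
  moreover have "connected (I \<inter> {..<x})"
    using assms(3) by (intro is_interval_connected is_interval_Int is_interval_io)
  ultimately have "connected (graph f (I \<inter> {..<x}))"
    by (rule connected_continuous_image)
  moreover have "graph f (I \<inter> {..<x}) \<subseteq> graph f I" "(x, f x) \<in> graph f I"
    "(x, f x) \<notin> graph f (I \<inter> {..<x})"
    using \<open>x \<in> I\<close> by auto
  ultimately show ?thesis
    using connected_one_side_if_monotone_order[OF mono, of "graph f (I \<inter> {..<x})" "(x, f x)"]
    by auto
qed

lemma sigma_finite_hausdorff_graph_if_monotone_order:
  fixes f :: "real \<Rightarrow> real"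
  assumes mono: "monotone_order (graph f I) r c" "0 \<le> c"
    and "is_interval I" "continuous_on I f"
  shows "sigma_finite_hausdorff 1 (graph f I)"
proof -
  define Up where "Up = {x \<in> I. \<forall>y\<in>I. y < x \<longrightarrow> ((y, f y), (x, f x)) \<in> r}"
  define Down where "Down = {x \<in> I. \<forall>y\<in>I. y < x \<longrightarrow> ((x, f x), (y, f y)) \<in> r}"
  have "I = Up \<union> Down"
    using monotone_order_graph_left_side[OF mono assms(3,4)] by (auto simp: Up_def Down_def)
  then have "graph f I = graph f Up \<union> graph f Down"
    by (simp only: image_Un)
  moreover have "monotone_along (\<lambda>x. (x, f x)) Up c"
    by (rule monotone_along_if_order_preserving[OF mono(1)]) (auto simp: Up_def inj_on_def)
  moreover have "monotone_along (\<lambda>x. (x, f x)) Down (c + 1)"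
    by (rule monotone_along_if_order_reversing[OF mono(1)]) (auto simp: Down_def inj_on_def)
  ultimately show ?thesis
    by (simp add: sigma_finite_hausdorff_Un sigma_finite_hausdorff_graph_if_monotone_along)
qed

lemma hausdorff_measure_graph_nonzero:
  fixes f :: "real \<Rightarrow> real"
  assumes "is_interval I" "a \<in> I" "b \<in> I" "a < b" "0 \<le> s" "s \<le> 1"
  shows "hausdorff_measure s (graph f I) \<noteq> 0"
proof -
  have "{a..b} \<subseteq> fst ` graph f I"
  proof
    fix x assume "x \<in> {a..b}"
    then have "x \<in> I"
      using assms(1)[unfolded is_interval_1, rule_format, of a b x] \<open>a \<in> I\<close> \<open>b \<in> I\<close> by simp
    then show "x \<in> fst ` graph f I"
      by (simp add: image_image)
  qed
  then show ?thesis
    using hausdorff_measure_ge_fst_image[of a b "graph f I" s] assms(4-6) by auto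
qed

theorem corollary3p6:
  fixes I :: "real set" and f :: "real \<Rightarrow> real"
  assumes "is_interval I" and "\<exists>a\<in>I. \<exists>b\<in>I. a < b"
    and "continuous_on I f"
    and "monotone_metric ((\<lambda>x. (x, f x)) ` I)"
  shows "sigma_finite_hausdorff 1 ((\<lambda>x. (x, f x)) ` I)
         \<and> hausdorff_dim ((\<lambda>x. (x, f x)) ` I) = 1"
proof -
  obtain r c where "c > 0" and "monotone_order (graph f I) r c"
    using assms(4) by (auto simp: monotone_metric_iff)
  then have sigma_finite: "sigma_finite_hausdorff 1 (graph f I)"
    using assms(1,3) by (intro sigma_finite_hausdorff_graph_if_monotone_order) auto
  obtain a b where "a \<in> I" "b \<in> I" "a < b"
    using assms(2) by blast
  have "hausdorff_dim (graph f I) = 1"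
  proof (rule hausdorff_dim_eqI)
    show "hausdorff_measure s (graph f I) = 0" if "1 < s" for s
      using hausdorff_measure_null_if_sigma_finite_lower[OF sigma_finite _ that] by simp
    show "hausdorff_measure s (graph f I) \<noteq> 0" if "0 \<le> s" "s < 1" for s
      using assms(1) \<open>a \<in> I\<close> \<open>b \<in> I\<close> \<open>a < b\<close> that by (intro hausdorff_measure_graph_nonzero) auto
  qed simp
  with sigma_finite show ?thesis
    by simp
qed

end
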